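(* Let $\alpha,\delta\in(0,1)$, $\epsilon>0$, and let $K\ge1$ be an integer. Let $s^1,\dots,s^K$ be real-valued score functions of the input. Let $\mathcal{T}_\mathrm{cal}=\{X_1,\dots,X_{n_\mathrm{cal}}\}$ be a calibration set of inputs drawn i.i.d. from the in-distribution input law $\mathrm{P}_X$, and let $X_\mathrm{test}$ be a new input. Write $T^i_j=s^i(X_j)$, $T^i_\mathrm{test}=s^i(X_\mathrm{test})$ and define conformal p-values $$\hat Q^i=\frac{1+|\{j\in\mathcal{T}_\mathrm{cal}: T^i_j\ge T^i_\mathrm{test}\}|}{1+n_\mathrm{cal}},\qquad i=1,\dots,K.$$ Let $m=\left|\left\{i:\hat Q^i\le\frac{\alpha}{(1+\epsilon)K}\right\}\right|$ and declare $X_\mathrm{test}$ to be OOD if $m\ge1$. Let $a=\lfloor (n_\mathrm{cal}+1)\frac{\alpha}{(1+\epsilon)K}\rfloor$, $b=(n_\mathrm{cal}+1)-a$, $\mu=\frac{a}{a+b}$, and suppose $n_\mathrm{cal}$ satisfies $I_{(1+\epsilon)\mu}(a,b)\ge1-\frac{\delta}{K}$, where $I_x(a,b)$ is the CDF at $x$ of a $\mathrm{Beta}(a,b)$ distribution. Let $\mathrm{H}_0$ denote the hypothesis that $X_\mathrm{test}\sim\mathrm{P}_X$ independently of $\mathcal{T}_\mathrm{cal}$. Then, with probability at least $1-\delta$ over the draw of $\mathcal{T}_\mathrm{cal}$, $$\mathrm{P}_{\mathrm{H}_0}(\text{declare OOD}\mid\mathcal{T}_\mathrm{cal})\le\alp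ha.$$
   Context: Each score $s^i(X)$ with $X\sim\mathrm{P}_X$ is assumed to have a continuous distribution; no assumption is made on the dependence among the scores. $\mathrm{P}_{\mathrm{H}_0}(\cdot\mid\mathcal{T}_\mathrm{cal})$ is the probability over $X_\mathrm{test}\sim\mathrm{P}_X$ with the calibration set held fixed. The condition on $n_\mathrm{cal}$ presupposes $a\ge1$ so that the Beta distribution is defined. *)

theory Defs
  imports "HOL-Probability.Probability"
begin

text \<open>The density is
  supported on [0,1], so the CDF is 0 for x \<le> 0 and 1 for x \<ge> 1.\<close>
definition beta_cdf :: "nat \<Rightarrow> nat \<Rightarrow> real \<Rightarrow> real" where
  "beta_cdf a b x =
     (\<integral>t\<in>{0..min x 1}. t ^ (a - 1) * (1 - t) ^ (b - 1) \<partial>lborel) /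
     (\<integral>t\<in>{0..1}. t ^ (a - 1) * (1 - t) ^ (b - 1) \<partial>lborel)"

definition conformal_pvalue ::
  "(nat \<Rightarrow> 'a \<Rightarrow> real) \<Rightarrow> nat \<Rightarrow> (nat \<Rightarrow> 'a) \<Rightarrow> nat \<Rightarrow> 'a \<Rightarrow> real" where
  "conformal_pvalue s n xs i x =
     (1 + real (card {j. j < n \<and> s i (xs j) \<ge> s i x})) / (1 + real n)"

definition declare_ood ::
  "(nat \<Rightarrow> 'a \<Rightarrow> real) \<Rightarrow> nat \<Rightarrow> nat \<Rightarrow> real \<Rightarrow> real \<Rightarrow> (nat \<Rightarrow> 'a) \<Rightarrow> 'a \<Rightarrow> bool" where
  "declare_ood s K n \<alpha> \<epsilon> xs x \<longleftrightarrow>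
     card {i. i < K \<and> conformal_pvalue s n xs i x \<le> \<alpha> / ((1 + \<epsilon>) * real K)} \<ge> 1"

end

theory Submission
  imports Defs
begin

text \<open>
  Put \<open>a = \<lfloor>(n + 1) \<alpha> / ((1 + \<epsilon>) K)\<rfloor>\<close> and \<open>p = (1 + \<epsilon>) a / (n + 1)\<close>, so that
  \<open>K p \<le> \<alpha>\<close>. For each score choose a threshold \<open>c\<^sub>i\<close> with \<open>P(s\<^sub>i \<ge> c\<^sub>i) \<ge> p\<close> and
  \<open>P(s\<^sub>i > c\<^sub>i) \<le> p\<close>; such an upper quantile exists for every real random variable. The number of calibration points with \<open>s\<^sub>i \<ge> c\<^sub>i\<close>
  is binomial with success probability at least \<open>p\<close>, hence reaches \<open>a\<close> with probability at
  least \<open>P(Bin(n, p) \<ge> a) = I\<^sub>p(a, n + 1 - a) \<ge> 1 - \<delta> / K\<close>. When it does, the p-value of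
  score \<open>i\<close> can be small enough to declare OOD (fewer than \<open>a\<close> calibration scores at or
  above the test score) only if \<open>s\<^sub>i > c\<^sub>i\<close>, an event of probability at most \<open>p\<close>. Union
  bounds over the \<open>K\<close> scores, for the calibration event and for the test point, finish the
  proof.
\<close>

section \<open>Binomial tails and the Beta distribution\<close>

definition binomial_tail :: "nat \<Rightarrow> nat \<Rightarrow> real \<Rightarrow> real" where
  "binomial_tail n a x = (\<Sum>k=a..n. Bernstein n k x)"

lemma Bernstein_has_real_derivative:
  "(Bernstein n k has_real_derivative
      real k * real (n choose k) * x ^ (k - 1) * (1 - x) ^ (n - k)
    - real (Suc k) * real (n choose Suc k) * x ^ k * (1 - x) ^ (n - Suc k)) (at x)"
proof -
  have absorb: "real (Suc k) * real (n choose Suc k) = real (n - k) * real (n choose k)"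
    using binomial_absorption[of k n] binomial_absorb_comp[of n k] by (metis of_nat_mult)
  have "(Bernstein n k has_real_derivative
      real (n choose k) * (real k * x ^ (k - 1) * (1 - x) ^ (n - k)
        - real (n - k) * x ^ k * (1 - x) ^ (n - Suc k))) (at x)"
    unfolding Bernstein_def[abs_def]
    by (rule derivative_eq_intros refl)+ (simp add: algebra_simps)
  then show ?thesis
    unfolding absorb by (simp add: algebra_simps)
qed

lemma binomial_tail_has_real_derivative:
  assumes "a \<le> Suc n"
  shows "(binomial_tail n a has_real_derivative
            real a * real (n choose a) * x ^ (a - 1) * (1 - x) ^ (n - a)) (at x)"
proof -
  define D where "D k = real k * real (n choose k) * x ^ (k - 1) * (1 - x) ^ (n - k)" for k
  have "(binomial_tail n a has_real_derivative (\<Sum>k=a..n. D k - D (Suc k))) (at x)"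
    unfolding binomial_tail_def[abs_def] D_def diff_Suc_1
    by (intro DERIV_sum Bernstein_has_real_derivative)
  also have "(\<Sum>k=a..n. D k - D (Suc k)) = D a - D (Suc n)"
    using sum_Suc_diff[OF assms, of D] by (simp add: sum_subtractf)
  also have "D (Suc n) = 0"
    by (simp add: D_def)
  finally show ?thesis
    by (simp add: D_def)
qed

lemma binomial_tail_mono:
  assumes "0 \<le> x" "x \<le> y" "y \<le> 1"
  shows "binomial_tail n a x \<le> binomial_tail n a y"
proof (cases "a \<le> n")
  case True
  show ?thesis
    by (rule deriv_nonneg_imp_mono[OF binomial_tail_has_real_derivative])
       (use True assms in auto)
next
  case False
  then show ?thesis
    by (simp add: binomial_tail_def)
qed

lemma binomial_tail_at_0: "1 \<le> a \<Longrightarrow> binomial_tail n a 0 = 0"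
  by (simp add: binomial_tail_def Bernstein_def)

lemma binomial_tail_at_1:
  assumes "a \<le> n"
  shows "binomial_tail n a 1 = 1"
proof -
  have "binomial_tail n a 1 = (\<Sum>k=a..n. if k = n then 1 else 0)"
    unfolding binomial_tail_def Bernstein_def by (intro sum.cong) auto
  then show ?thesis
    using assms by simp
qed

lemma integral_beta_kernel:
  assumes "1 \<le> a" "a \<le> n" "0 \<le> y"
  shows "(\<integral>t\<in>{0..y}. t ^ (a - 1) * (1 - t) ^ (n - a) \<partial>lborel)
           = binomial_tail n a y / (real a * real (n choose a))"
proof -
  let ?c = "real a * real (n choose a)"
  have "(\<integral>t\<in>{0..y}. t ^ (a - 1) * (1 - t) ^ (n - a) \<partial>lborel)
      = (\<integral>t. indicator {0..y} t *\<^sub>R (t ^ (a - 1) * (1 - t) ^ (n - a)) \<partial>lborel)"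
    by (simp add: set_lebesgue_integral_def)
  also have "\<dots> = binomial_tail n a y / ?c - binomial_tail n a 0 / ?c"
  proof (rule integral_FTC_atLeastAtMost[OF assms(3)])
    fix x :: real
    have "((\<lambda>x. binomial_tail n a x / ?c) has_real_derivative x ^ (a - 1) * (1 - x) ^ (n - a)) (at x)"
      using DERIV_cdivide[where c = ?c, OF binomial_tail_has_real_derivative, of a n x] assms
      by simp
    then show "((\<lambda>x. binomial_tail n a x / ?c) has_vector_derivative x ^ (a - 1) * (1 - x) ^ (n - a))
        (at x within {0..y})"
      by (simp add: has_real_derivative_iff_has_vector_derivative[symmetric] has_field_derivative_at_within)
  qed (intro continuous_intros)
  finally show ?thesis
    using binomial_tail_at_0[OF assms(1)] by simp
qed

lemma beta_cdf_eq_binomial_tail: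
  assumes "1 \<le> a" "a \<le> n" "0 \<le> y" "y \<le> 1"
  shows "beta_cdf a (Suc n - a) y = binomial_tail n a y"
proof -
  have "Suc n - a - 1 = n - a" "min y 1 = y" "min 1 1 = (1::real)"
    using assms by auto
  moreover have "real a * real (n choose a) > 0"
    using assms by simp
  ultimately show ?thesis
    unfolding beta_cdf_def
    by (simp only: integral_beta_kernel assms binomial_tail_at_1 zero_le_one) (use assms in simp)
qed

section \<open>Counting hits of an event in an i.i.d. sample\<close>

lemma sum_subsets_card_ge_eq_binomial_tail:
  fixes p :: real
  assumes "finite I"
  shows "(\<Sum>S | S \<subseteq> I \<and> a \<le> card S. p ^ card S * (1 - p) ^ (card I - card S))
           = binomial_tail (card I) a p"
proof -
  let ?SS = "{S. S \<subseteq> I \<and> a \<le> card S}"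
  have fin: "finite ?SS"
    by (rule finite_subset[of _ "Pow I"]) (use assms in auto)
  have "(\<Sum>S\<in>?SS. p ^ card S * (1 - p) ^ (card I - card S))
      = (\<Sum>k=a..card I. \<Sum>S | S \<in> ?SS \<and> card S = k. p ^ card S * (1 - p) ^ (card I - card S))"
    by (rule sum.group[symmetric, OF fin]) (use assms card_mono in auto)
  also have "\<dots> = (\<Sum>k=a..card I. Bernstein (card I) k p)"
  proof (intro sum.cong refl)
    fix k assume "k \<in> {a..card I}"
    then have "{S. S \<in> ?SS \<and> card S = k} = {S. S \<subseteq> I \<and> card S = k}"
      by auto
    then show "(\<Sum>S | S \<in> ?SS \<and> card S = k. p ^ card S * (1 - p) ^ (card I - card S))
        = Bernstein (card I) k p"
      using assms by (simp add: n_subsets Bernstein_def)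
  qed
  finally show ?thesis
    unfolding binomial_tail_def .
qed

definition hit_pattern :: "'i set \<Rightarrow> 'a measure \<Rightarrow> 'a set \<Rightarrow> 'i set \<Rightarrow> ('i \<Rightarrow> 'a) set" where
  "hit_pattern I M B S = (\<Pi>\<^sub>E j\<in>I. if j \<in> S then B else space M - B)"

lemma hit_pattern_in_sets:
  "finite I \<Longrightarrow> B \<in> sets M \<Longrightarrow> hit_pattern I M B S \<in> sets (\<Pi>\<^sub>M j\<in>I. M)"
  unfolding hit_pattern_def by (intro sets_PiM_I_finite) auto

lemma disjoint_family_hit_pattern: "disjoint_family_on (hit_pattern I M B) (Pow I)"
  unfolding disjoint_family_on_def hit_pattern_def
  by (auto simp: PiE_iff) (metis Diff_iff subsetD)+

lemma count_ge_eq_UN_hit_pattern: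
  assumes "B \<subseteq> space M"
  shows "{xs \<in> space (\<Pi>\<^sub>M j\<in>I. M). a \<le> card {j\<in>I. xs j \<in> B}}
           = (\<Union>S\<in>{S. S \<subseteq> I \<and> a \<le> card S}. hit_pattern I M B S)"
proof safe
  fix xs assume "xs \<in> space (\<Pi>\<^sub>M j\<in>I. M)" "a \<le> card {j\<in>I. xs j \<in> B}"
  then show "xs \<in> (\<Union>S\<in>{S. S \<subseteq> I \<and> a \<le> card S}. hit_pattern I M B S)"
    by (intro UN_I[of "{j\<in>I. xs j \<in> B}"]) (auto simp: hit_pattern_def space_PiM PiE_iff)
next
  fix xs S assume S: "S \<subseteq> I" "a \<le> card S" "xs \<in> hit_pattern I M B S"
  then show "xs \<in> space (\<Pi>\<^sub>M j\<in>I. M)"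
    using assms by (auto simp: hit_pattern_def space_PiM PiE_iff split: if_splits)
  have "{j\<in>I. xs j \<in> B} = S"
    using S by (auto simp: hit_pattern_def PiE_iff split: if_splits)
  with S show "a \<le> card {j\<in>I. xs j \<in> B}"
    by simp
qed

context prob_space
begin

lemma prob_hit_pattern:
  assumes "finite I" "S \<subseteq> I" "B \<in> events"
  shows "measure (\<Pi>\<^sub>M j\<in>I. M) (hit_pattern I M B S) = prob B ^ card S * (1 - prob B) ^ (card I - card S)"
proof -
  interpret P: finite_product_prob_space "\<lambda>_. M" I
    by unfold_locales (use assms in auto)
  have "measure (\<Pi>\<^sub>M j\<in>I. M) (hit_pattern I M B S)
      = (\<Prod>j\<in>I. if j \<in> S then prob B else 1 - prob B)"
    unfolding hit_pattern_def using assms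
    by (subst P.prob_times) (auto intro!: prod.cong simp: prob_compl)
  also have "\<dots> = prob B ^ card S * (1 - prob B) ^ (card I - card S)"
    using assms by (simp add: prod.If_cases Int_absorb1 Diff_eq[symmetric] card_Diff_subset finite_subset)
  finally show ?thesis .
qed

lemma count_ge_in_sets_PiM:
  assumes "finite I" "B \<in> events"
  shows "{xs \<in> space (\<Pi>\<^sub>M j\<in>I. M). a \<le> card {j\<in>I. xs j \<in> B}} \<in> sets (\<Pi>\<^sub>M j\<in>I. M)"
proof -
  have "finite {S. S \<subseteq> I \<and> a \<le> card S}"
    by (rule finite_subset[of _ "Pow I"]) (use assms in auto)
  then show ?thesis
    using assms sets.sets_into_space
    by (subst count_ge_eq_UN_hit_pattern) (auto intro!: sets.finite_UN hit_pattern_in_sets)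
qed

lemma prob_count_ge_PiM:
  assumes "finite I" "B \<in> events"
  shows "measure (\<Pi>\<^sub>M j\<in>I. M) {xs \<in> space (\<Pi>\<^sub>M j\<in>I. M). a \<le> card {j\<in>I. xs j \<in> B}}
           = binomial_tail (card I) a (prob B)"
proof -
  interpret P: finite_product_prob_space "\<lambda>_. M" I
    by unfold_locales (use assms in auto)
  let ?SS = "{S. S \<subseteq> I \<and> a \<le> card S}"
  have "finite ?SS"
    by (rule finite_subset[of _ "Pow I"]) (use assms in auto)
  moreover have "disjoint_family_on (hit_pattern I M B) ?SS"
    by (rule disjoint_family_on_mono[OF _ disjoint_family_hit_pattern]) auto
  ultimately have "measure (\<Pi>\<^sub>M j\<in>I. M) (\<Union>S\<in>?SS. hit_pattern I M B S)
      = (\<Sum>S\<in>?SS. measure (\<Pi>\<^sub>M j\<in>I. M) (hit_pattern I M B S))"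
    using assms by (intro P.finite_measure_finite_Union) (auto intro: hit_pattern_in_sets)
  also have "\<dots> = (\<Sum>S\<in>?SS. prob B ^ card S * (1 - prob B) ^ (card I - card S))"
    using assms by (intro sum.cong) (auto simp: prob_hit_pattern)
  also have "\<dots> = binomial_tail (card I) a (prob B)"
    using assms(1) by (rule sum_subsets_card_ge_eq_binomial_tail)
  finally show ?thesis
    using assms sets.sets_into_space by (subst count_ge_eq_UN_hit_pattern) auto
qed

end

section \<open>Quantiles\<close>

lemma (in real_distribution) cdf_quantile_exists:
  assumes q: "0 < q" "q < 1"
  obtains c where "q \<le> cdf M c" and "measure M {..<c} \<le> q"
proof -
  define R where "R = {r. q \<le> cdf M r}"
  have "\<forall>\<^sub>F r in at_top. q < cdf M r"
    using cdf_lim_at_top_prob by (rule order_tendstoD) (use q in simp)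
  then obtain r0 where "r0 \<in> R"
    unfolding R_def eventually_at_top_linorder by (auto intro: less_imp_le)
  have "\<forall>\<^sub>F r in at_bot. cdf M r < q"
    using cdf_lim_at_bot by (rule order_tendstoD) (use q in simp)
  then obtain r1 where r1: "\<And>r. r \<le> r1 \<Longrightarrow> cdf M r < q"
    unfolding eventually_at_bot_linorder by auto
  have "bdd_below R"
  proof (rule bdd_belowI)
    fix r assume "r \<in> R"
    then show "r1 \<le> r"
      using r1[of r] unfolding R_def by (cases "r \<le> r1") auto
  qed
  define c where "c = Inf R"
  have below_c: "cdf M r < q" if "r < c" for r
    using that cInf_lower[OF _ \<open>bdd_below R\<close>, of r] unfolding c_def R_def by force
  have above_c: "q \<le> cdf M r" if "c < r" for r
  proof -
    obtain r' where "r' \<in> R" "r' < r"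
      using \<open>c < r\<close> cInf_less_iff[of R r] \<open>r0 \<in> R\<close> \<open>bdd_below R\<close> unfolding c_def by blast
    then show ?thesis
      unfolding R_def using cdf_nondecreasing[of r' r] by simp
  qed
  show ?thesis
  proof (rule that)
    show "q \<le> cdf M c"
    proof (rule tendsto_lowerbound)
      show "(cdf M \<longlongrightarrow> cdf M c) (at_right c)"
        using cdf_is_right_cont by (simp add: continuous_within)
      show "\<forall>\<^sub>F r in at_right c. q \<le> cdf M r"
        using eventually_at_right_less by (rule eventually_mono) (rule above_c)
    qed simp
    show "measure M {..<c} \<le> q"
    proof (rule tendsto_upperbound)
      show "\<forall>\<^sub>F r in at_left c. cdf M r \<le> q"
        using eventually_at_left_real[of "c - 1" c]
        by (rule eventually_mono) (auto intro: below_c less_imp_le)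
    qed (simp_all add: cdf_at_left)
  qed
qed

context prob_space
begin

lemma upper_quantile_exists:
  fixes f :: "'a \<Rightarrow> real"
  assumes f: "random_variable borel f" and p: "0 < p" "p < 1"
  obtains c where "p \<le> \<P>(x in M. c \<le> f x)" and "\<P>(x in M. c < f x) \<le> p"
proof -
  interpret D: real_distribution "distr M borel f"
    using f by simp
  obtain c where "1 - p \<le> cdf (distr M borel f) c" "measure (distr M borel f) {..<c} \<le> 1 - p"
    using D.cdf_quantile_exists[of "1 - p"] p by auto
  moreover have "cdf (distr M borel f) c = \<P>(x in M. f x \<le> c)"
    using f unfolding cdf_def by (subst measure_distr) (auto intro!: arg_cong[where f = prob])
  moreover have "measure (distr M borel f) {..<c} = \<P>(x in M. f x < c)"
    using f by (subst measure_distr) (auto intro!: arg_cong[where f = prob])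
  moreover have "{x \<in> space M. f x \<le> c} \<in> events" "{x \<in> space M. f x < c} \<in> events"
    using f by measurable
  ultimately show ?thesis
    using prob_neg[of "\<lambda>x. f x \<le> c"] prob_neg[of "\<lambda>x. f x < c"]
    by (intro that[of c]) (auto simp: not_le not_less)
qed

section \<open>Calibration\<close>

lemma prob_finite_INT_ge:
  assumes "finite I" "I \<noteq> {}" "\<And>i. i \<in> I \<Longrightarrow> E i \<in> events"
  shows "1 - (\<Sum>i\<in>I. 1 - prob (E i)) \<le> prob (\<Inter>i\<in>I. E i)"
proof -
  have "(\<Inter>i\<in>I. E i) \<in> events"
    using assms by (intro sets.finite_INT) auto
  then have "1 - prob (\<Inter>i\<in>I. E i) = prob (\<Union>i\<in>I. space M - E i)"
    using assms(2) by (subst prob_compl[symmetric]) (auto intro!: arg_cong[where f = prob])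
  also have "\<dots> \<le> (\<Sum>i\<in>I. prob (space M - E i))"
    using assms by (intro finite_measure_subadditive_finite) auto
  also have "\<dots> = (\<Sum>i\<in>I. 1 - prob (E i))"
    using assms by (intro sum.cong) (auto simp: prob_compl)
  finally show ?thesis
    by simp
qed

lemma calibration_event:
  fixes f :: "'a \<Rightarrow> real" and n a :: nat
  assumes f: "random_variable borel f" and "0 \<le> p" and c: "p \<le> \<P>(x in M. c \<le> f x)"
  defines "E \<equiv> {xs \<in> space (\<Pi>\<^sub>M j\<in>{..<n}. M). a \<le> card {j\<in>{..<n}. xs j \<in> {x \<in> space M. c \<le> f x}}}"
  shows "E \<in> sets (\<Pi>\<^sub>M j\<in>{..<n}. M)"
    and "binomial_tail n a p \<le> measure (\<Pi>\<^sub>M j\<in>{..<n}. M) E"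
    and "\<And>xs x. xs \<in> E \<Longrightarrow> x \<in> space M \<Longrightarrow> card {j. j < n \<and> f x \<le> f (xs j)} < a \<Longrightarrow> c < f x"
proof -
  have B: "{x \<in> space M. c \<le> f x} \<in> events"
    using f by measurable
  show "E \<in> sets (\<Pi>\<^sub>M j\<in>{..<n}. M)"
    unfolding E_def using B by (intro count_ge_in_sets_PiM) auto
  have "binomial_tail n a p \<le> binomial_tail n a \<P>(x in M. c \<le> f x)"
    using \<open>0 \<le> p\<close> c by (intro binomial_tail_mono) auto
  also have "\<dots> = measure (\<Pi>\<^sub>M j\<in>{..<n}. M) E"
    unfolding E_def using prob_count_ge_PiM[OF _ B, of "{..<n}"] by simp
  finally show "binomial_tail n a p \<le> measure (\<Pi>\<^sub>M j\<in>{..<n}. M) E" .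
next
  fix xs x assume "xs \<in> E" "x \<in> space M" "card {j. j < n \<and> f x \<le> f (xs j)} < a"
  show "c < f x"
  proof (rule ccontr)
    assume "\<not> c < f x"
    then have "{j\<in>{..<n}. xs j \<in> {x \<in> space M. c \<le> f x}} \<subseteq> {j. j < n \<and> f x \<le> f (xs j)}"
      by auto
    then have "card {j\<in>{..<n}. xs j \<in> {x \<in> space M. c \<le> f x}} \<le> card {j. j < n \<and> f x \<le> f (xs j)}"
      by (intro card_mono) auto
    with \<open>xs \<in> E\<close> \<open>card {j. j < n \<and> f x \<le> f (xs j)} < a\<close> show False
      unfolding E_def by simp
  qed
qed

lemma simultaneous_calibration:
  fixes s :: "nat \<Rightarrow> 'a \<Rightarrow> real"
  assumes "1 \<le> K" "\<And>i. i < K \<Longrightarrow> random_variable borel (s i)" "0 < p" "p < 1"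
  obtains E where "E \<in> sets (\<Pi>\<^sub>M j\<in>{..<n}. M)"
    and "1 - real K * (1 - binomial_tail n a p) \<le> measure (\<Pi>\<^sub>M j\<in>{..<n}. M) E"
    and "\<And>xs. xs \<in> E \<Longrightarrow> \<P>(x in M. \<exists>i<K. card {j. j < n \<and> s i x \<le> s i (xs j)} < a) \<le> real K * p"
proof -
  let ?P = "\<Pi>\<^sub>M j\<in>{..<n}. M"
  interpret P: prob_space ?P
    by (intro prob_space_PiM prob_space_axioms)
  have "\<exists>c. p \<le> \<P>(x in M. c \<le> s i x) \<and> \<P>(x in M. c < s i x) \<le> p" if "i < K" for i
    by (rule upper_quantile_exists[OF assms(2)[OF that] assms(3,4)]) blast
  then obtain c where c: "\<And>i. i < K \<Longrightarrow> p \<le> \<P>(x in M. c i \<le> s i x)"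
    "\<And>i. i < K \<Longrightarrow> \<P>(x in M. c i < s i x) \<le> p"
    by metis
  define E where "E i = {xs \<in> space ?P. a \<le> card {j\<in>{..<n}. xs j \<in> {x \<in> space M. c i \<le> s i x}}}" for i
  note E = calibration_event[OF assms(2) less_imp_le[OF assms(3)] c(1), where n = n and a = a, folded E_def]
  show ?thesis
  proof (rule that)
    show "(\<Inter>i<K. E i) \<in> sets ?P"
      using assms E(1) by (intro sets.finite_INT) (auto simp: lessThan_empty_iff)
    have "1 - real K * (1 - binomial_tail n a p) \<le> 1 - (\<Sum>i<K. 1 - measure ?P (E i))"
      using sum_mono[of "{..<K}" "\<lambda>i. 1 - measure ?P (E i)" "\<lambda>_. 1 - binomial_tail n a p"] E(2) assms
      by simp
    also have "\<dots> \<le> measure ?P (\<Inter>i<K. E i)"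
      using assms E(1) by (intro P.prob_finite_INT_ge) (auto simp: lessThan_empty_iff)
    finally show "1 - real K * (1 - binomial_tail n a p) \<le> measure ?P (\<Inter>i<K. E i)" .
  next
    fix xs assume "xs \<in> (\<Inter>i<K. E i)"
    have sets: "{x \<in> space M. c i < s i x} \<in> events" if "i < K" for i
      using assms(2)[OF that] by measurable
    have "\<P>(x in M. \<exists>i<K. card {j. j < n \<and> s i x \<le> s i (xs j)} < a)
        \<le> prob (\<Union>i<K. {x \<in> space M. c i < s i x})"
      using \<open>xs \<in> (\<Inter>i<K. E i)\<close> sets by (intro finite_measure_mono) (auto dest: E(3)[rotated])
    also have "\<dots> \<le> (\<Sum>i<K. \<P>(x in M. c i < s i x))"
      using sets by (intro finite_measure_subadditive_finite) auto
    also have "\<dots> \<le> real K * p"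
      using sum_mono[of "{..<K}" "\<lambda>i. \<P>(x in M. c i < s i x)" "\<lambda>_. p"] c by simp
    finally show "\<P>(x in M. \<exists>i<K. card {j. j < n \<and> s i x \<le> s i (xs j)} < a) \<le> real K * p" .
  qed
qed

end

lemma calibration_parameters:
  fixes \<alpha> \<epsilon> :: real and K n :: nat
  defines "a \<equiv> nat \<lfloor>(real n + 1) * (\<alpha> / ((1 + \<epsilon>) * real K))\<rfloor>"
  defines "p \<equiv> (1 + \<epsilon>) * (real a / real (n + 1))"
  assumes \<alpha>: "0 < \<alpha>" "\<alpha> < 1" and \<epsilon>: "0 < \<epsilon>" and K: "1 \<le> K" and a: "1 \<le> a"
  shows "a \<le> n" and "0 < p" and "p < 1" and "real K * p \<le> \<alpha>"
proof -
  define t where "t = \<alpha> / ((1 + \<epsilon>) * real K)"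
  have "1 \<le> (1 + \<epsilon>) * real K"
    using mult_mono[of 1 "1 + \<epsilon>" 1 "real K"] \<epsilon> K by simp
  then have "0 < t" "t \<le> \<alpha>"
    using \<alpha> unfolding t_def by (auto simp: divide_le_eq mult_le_cancel_left1)
  have a_le: "real a \<le> (real n + 1) * t"
    unfolding a_def t_def[symmetric] using \<open>0 < t\<close> by (intro of_nat_floor) simp
  also have "\<dots> < real n + 1"
    using \<open>t \<le> \<alpha>\<close> \<alpha> by simp
  finally show "a \<le> n"
    by simp
  have "real a / real (n + 1) \<le> t"
    using a_le by (simp add: pos_divide_le_eq mult.commute add.commute)
  then have "real K * p \<le> real K * ((1 + \<epsilon>) * t)"
    unfolding p_def using \<epsilon> by (intro mult_left_mono) auto
  also have "\<dots> = \<alpha>"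
    unfolding t_def using \<epsilon> K by simp
  finally show "real K * p \<le> \<alpha>" .
  show "0 < p"
    unfolding p_def using a \<epsilon> by simp
  then have "p \<le> real K * p"
    using K by simp
  with \<open>real K * p \<le> \<alpha>\<close> show "p < 1"
    using \<alpha> by simp
qed

lemma conformal_pvalue_le_iff:
  "conformal_pvalue s n xs i x \<le> t \<longleftrightarrow>
     card {j. j < n \<and> s i x \<le> s i (xs j)} < nat \<lfloor>(real n + 1) * t\<rfloor>"
proof -
  let ?c = "card {j. j < n \<and> s i x \<le> s i (xs j)}"
  have "conformal_pvalue s n xs i x \<le> t \<longleftrightarrow> real (1 + ?c) \<le> (real n + 1) * t"
    unfolding conformal_pvalue_def by (simp add: divide_le_eq add.commute mult.commute)
  also have "\<dots> \<longleftrightarrow> int (1 + ?c) \<le> \<lfloor>(real n + 1) * t\<rfloor>"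
    by (simp only: le_floor_iff of_int_of_nat_eq)
  also have "\<dots> \<longleftrightarrow> ?c < nat \<lfloor>(real n + 1) * t\<rfloor>"
    by linarith
  finally show ?thesis .
qed

lemma declare_ood_iff:
  "declare_ood s K n \<alpha> \<epsilon> xs x \<longleftrightarrow>
     (\<exists>i<K. card {j. j < n \<and> s i x \<le> s i (xs j)} < nat \<lfloor>(real n + 1) * (\<alpha> / ((1 + \<epsilon>) * real K))\<rfloor>)"
  unfolding declare_ood_def conformal_pvalue_le_iff[symmetric]
  by (auto simp: Suc_le_eq card_gt_0_iff)

theorem theorem2:
  fixes M :: "'a measure" and s :: "nat \<Rightarrow> 'a \<Rightarrow> real"
    and \<alpha> \<delta> \<epsilon> :: real and K n :: nat
  assumes "prob_space M"
    and "0 < \<alpha>" "\<alpha> < 1" "0 < \<delta>" "\<delta> < 1" "0 < \<epsilon>" "K \<ge> 1"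
    and meas: "\<And>i. i < K \<Longrightarrow> s i \<in> borel_measurable M"
    and cont: "\<And>i r. i < K \<Longrightarrow> measure M {x \<in> space M. s i x = r} = 0"
    and a_pos: "nat \<lfloor>(real n + 1) * (\<alpha> / ((1 + \<epsilon>) * real K))\<rfloor> \<ge> 1"
    and ncal: "let a = nat \<lfloor>(real n + 1) * (\<alpha> / ((1 + \<epsilon>) * real K))\<rfloor>;
                   b = (n + 1) - a;
                   \<mu> = real a / real (a + b)
               in beta_cdf a b ((1 + \<epsilon>) * \<mu>) \<ge> 1 - \<delta> / real K"
  shows "\<exists>E \<in> sets (PiM {..<n} (\<lambda>_. M)).
           measure (PiM {..<n} (\<lambda>_. M)) E \<ge> 1 - \<delta> \<and>
           (\<forall>xs \<in> E. measure M {x \<in> space M. declare_ood s K n \<alpha> \<epsilon> xs x} \<le> \<alpha>)"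
proof -
  interpret prob_space M by fact
  define a where "a = nat \<lfloor>(real n + 1) * (\<alpha> / ((1 + \<epsilon>) * real K))\<rfloor>"
  define p where "p = (1 + \<epsilon>) * (real a / real (n + 1))"
  note p = calibration_parameters[OF assms(2,3,6,7) a_pos, folded a_def p_def]
  have "a + (n + 1 - a) = n + 1"
    using p(1) by simp
  then have "1 - \<delta> / real K \<le> beta_cdf a (n + 1 - a) p"
    using ncal unfolding Let_def a_def[symmetric] p_def by simp
  then have "1 - \<delta> / real K \<le> binomial_tail n a p"
    using beta_cdf_eq_binomial_tail[OF _ p(1)] a_pos p(2,3) by (simp add: a_def)
  show ?thesis
  proof (rule simultaneous_calibration[where n = n and a = a, OF assms(7) _ p(2,3)])
    fix E assume E: "E \<in> sets (\<Pi>\<^sub>M j\<in>{..<n}. M)"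
      "1 - real K * (1 - binomial_tail n a p) \<le> measure (\<Pi>\<^sub>M j\<in>{..<n}. M) E"
      "\<And>xs. xs \<in> E \<Longrightarrow> \<P>(x in M. \<exists>i<K. card {j. j < n \<and> s i x \<le> s i (xs j)} < a) \<le> real K * p"
    show ?thesis
    proof (intro bexI[OF _ E(1)] conjI ballI)
      have "1 - \<delta> \<le> 1 - real K * (1 - binomial_tail n a p)"
        using \<open>1 - \<delta> / real K \<le> binomial_tail n a p\<close> assms(7) by (simp add: field_simps)
      with E(2) show "1 - \<delta> \<le> measure (\<Pi>\<^sub>M j\<in>{..<n}. M) E"
        by linarith
      show "\<P>(x in M. declare_ood s K n \<alpha> \<epsilon> xs x) \<le> \<alpha>" if "xs \<in> E" for xs
        using E(3)[OF that] p(4) unfolding declare_ood_iff a_def[symmetric] by simp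
    qed
  qed (rule meas)
qed

end
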